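(* Assume condition (A1) on $(\beta_n)$. Then the additive-loss multiple testing procedure, which sets $\hat d_i=I(v_{in}>\beta_n)$ for $i=1,\ldots,m$ (the optimal decision rule for the loss $L(\mathbf d,\boldsymbol\theta)=c\sum_i d_i(1-r_i)+\sum_i(1-d_i)r_i$, $r_i=I(H_{1i}\text{ true})$, with $\beta_n=c/(1+c)$), is asymptotically consistent, i.e. $\lim_{n\to\infty}\delta(\mathbf d^t\mid\mathbf X_n)=1$ almost surely.
   Context: Data and models: $\mathbf X_n=(X_1,\ldots,X_n)$ are the first $n$ coordinates of a process with true distribution $P$; $p(\mathbf X_n)$ is the true joint density and $f_{\boldsymbol\theta}(\mathbf X_n)$ the postulated density for $\boldsymbol\theta=(\theta_1,\ldots,\theta_M)\in\boldsymbol\Theta=\Theta_1\times\cdots\times\Theta_M$ ($M\le\infty$); $P$ need not belong to the postulated family. $\pi$ is a prior, $\pi(\cdot\mid\mathbf X_n)$ the posterior. For $i=1,\ldots,m$ ($1<m\le M$, $m$ finite) one tests $H_{0i}:\theta_i\in\Theta_{0i}$ vs $H_{1i}:\theta_i\in\Theta_{1i}$ with $\Theta_{0i}\cap\Theta_{1i}=\emptyset$, $\Theta_{0i}\cup\Theta_{1i}=\Theta_i$. Decision configurations $\mathbf d\in\mathbb D=\{0,1\}^m$ ($d_i=1$: reject $H_{0i}$); $\Theta_{d_jj}$ is $\Theta_{0j}$ or $\Theta_{1j}$ according as $d_j=0$ or $1$. KL quantities: $h(\boldsymbol\theta)=\lim_n n^{-1}E_P[\log(p(\mathbf X_n)/f_{\boldsymbol\theta}(\mathbf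 X_n))]$; $h(A)=\pi\text{-}\operatorname{ess\,inf}_A h$, $J(\boldsymbol\theta)=h(\boldsymbol\theta)-h(\boldsymbol\Theta)$, $J(A)=\pi\text{-}\operatorname{ess\,inf}_A J$. With $\boldsymbol\Theta(\mathbf d)=\prod_{i\le m}\Theta_{d_ii}\times\prod_{i>m}\Theta_i$, the true configuration $\mathbf d^t$ is the unique $\mathbf d$ with $J(\boldsymbol\Theta(\mathbf d))=J(\boldsymbol\Theta)$. Let $\Upsilon_{ki}=\{\boldsymbol\theta:\theta_i\in\Theta_{ki}\}$, $J(H_{ki})=J(\Upsilon_{ki})$, $v_{in}=\pi(\Upsilon_{1i}\mid\mathbf X_n)$. Standing assumption (conclusion of Shalizi's (2009) theorem under his conditions (S1)–(S7), assumed throughout): for all $i,k$, $\pi(\Upsilon_{ki})>0$ and $\lim_n n^{-1}\log\pi(\Upsilon_{ki}\mid\mathbf X_n)=-J(\Upsilon_{ki})$ a.s.; $J(H_{1i})>0$ if $d^t_i=0$ and $J(H_{0i})>0$ if $d^t_i=1$. $\delta(\mathbf d\mid\mathbf X_n)=1$ if $\mathbf d$ is the configuration chosen by the procedure, $0$ otherwise. Condition (A1): $\liminf_n\beta_n>0$ and $\limsup_n\beta_n<1$. *)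

theory Defs
  imports "HOL-Probability.Probability"
begin

definition data_vec :: "(nat \<Rightarrow> 'w \<Rightarrow> 'x) \<Rightarrow> nat \<Rightarrow> 'w \<Rightarrow> 'x list" where
  "data_vec X n w = map (\<lambda>j. X j w) [0..<n]"

definition posterior :: "'p measure \<Rightarrow> ('p \<Rightarrow> 'x list \<Rightarrow> real) \<Rightarrow> 'x list \<Rightarrow> 'p set \<Rightarrow> real" where
  "posterior Q f xs A = (\<integral>\<theta>\<in>A. f \<theta> xs \<partial>Q) / (\<integral>\<theta>. f \<theta> xs \<partial>Q)"

definition ess_inf_on :: "'p measure \<Rightarrow> 'p set \<Rightarrow> ('p \<Rightarrow> ereal) \<Rightarrow> ereal" where
  "ess_inf_on Q A g = Sup {c. AE \<theta> in Q. \<theta> \<in> A \<longrightarrow> c \<le> g \<theta>}"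

definition KL_rate :: "'w measure \<Rightarrow> (nat \<Rightarrow> 'w \<Rightarrow> 'x) \<Rightarrow> ('x list \<Rightarrow> real)
    \<Rightarrow> ('p \<Rightarrow> 'x list \<Rightarrow> real) \<Rightarrow> 'p \<Rightarrow> real" where
  "KL_rate M X p f \<theta> =
     lim (\<lambda>n. (\<integral>w. ln (p (data_vec X n w) / f \<theta> (data_vec X n w)) \<partial>M) / real n)"

definition J_fun :: "'w measure \<Rightarrow> (nat \<Rightarrow> 'w \<Rightarrow> 'x) \<Rightarrow> ('x list \<Rightarrow> real)
    \<Rightarrow> ('p \<Rightarrow> 'x list \<Rightarrow> real) \<Rightarrow> 'p measure \<Rightarrow> 'p \<Rightarrow> ereal" where
  "J_fun M X p f Q \<theta> =
     ereal (KL_rate M X p f \<theta>) - ess_inf_on Q (space Q) (\<lambda>t. ereal (KL_rate M X p f t))"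

definition J_set :: "'w measure \<Rightarrow> (nat \<Rightarrow> 'w \<Rightarrow> 'x) \<Rightarrow> ('x list \<Rightarrow> real)
    \<Rightarrow> ('p \<Rightarrow> 'x list \<Rightarrow> real) \<Rightarrow> 'p measure \<Rightarrow> 'p set \<Rightarrow> ereal" where
  "J_set M X p f Q A = ess_inf_on Q A (J_fun M X p f Q)"

text \<open>Upsilon_{ki} = {theta : theta_i in Theta_{ki}}; k = True means the alternative H_{1i}
  (Theta_{1i} = Theta1 i), k = False the null (Theta_{0i} = Theta_i minus Theta_{1i}).\<close>
definition Ups :: "'p measure \<Rightarrow> (nat \<Rightarrow> 'p \<Rightarrow> 'c) \<Rightarrow> (nat \<Rightarrow> 'c set) \<Rightarrow> bool \<Rightarrow> nat \<Rightarrow> 'p set" where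
  "Ups Q coord Theta1 k i = {\<theta> \<in> space Q. (coord i \<theta> \<in> Theta1 i) = k}"

text \<open>Theta(d) for a decision configuration d (d i = True: reject H_{0i}).\<close>
definition Theta_conf :: "'p measure \<Rightarrow> (nat \<Rightarrow> 'p \<Rightarrow> 'c) \<Rightarrow> (nat \<Rightarrow> 'c set) \<Rightarrow> nat
    \<Rightarrow> (nat \<Rightarrow> bool) \<Rightarrow> 'p set" where
  "Theta_conf Q coord Theta1 m d = {\<theta> \<in> space Q. \<forall>i<m. (coord i \<theta> \<in> Theta1 i) = d i}"

text \<open>Decision configurations D = {0,1}^m, encoded as functions vanishing from m on.\<close>
definition configs :: "nat \<Rightarrow> (nat \<Rightarrow> bool) set" where
  "configs m = {d. \<forall>i\<ge>m. \<not> d i}"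

definition additive_rule :: "'p measure \<Rightarrow> ('p \<Rightarrow> 'x list \<Rightarrow> real) \<Rightarrow> (nat \<Rightarrow> 'p \<Rightarrow> 'c)
    \<Rightarrow> (nat \<Rightarrow> 'c set) \<Rightarrow> nat \<Rightarrow> (nat \<Rightarrow> real) \<Rightarrow> 'x list \<Rightarrow> nat \<Rightarrow> nat \<Rightarrow> bool" where
  "additive_rule Q f coord Theta1 m \<beta> xs n i =
     (i < m \<and> posterior Q f xs (Ups Q coord Theta1 True i) > \<beta> n)"

definition delta :: "'p measure \<Rightarrow> ('p \<Rightarrow> 'x list \<Rightarrow> real) \<Rightarrow> (nat \<Rightarrow> 'p \<Rightarrow> 'c)
    \<Rightarrow> (nat \<Rightarrow> 'c set) \<Rightarrow> nat \<Rightarrow> (nat \<Rightarrow> real) \<Rightarrow> (nat \<Rightarrow> bool) \<Rightarrow> 'x list \<Rightarrow> nat \<Rightarrow> real" where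
  "delta Q f coord Theta1 m \<beta> d xs n =
     (if d = additive_rule Q f coord Theta1 m \<beta> xs n then 1 else 0)"

end

theory Submission
  imports Defs
begin

text \<open>Shalizi's theorem says that the posterior probability of each false hypothesis H decays
  like exp(-n J(H)) with J(H) > 0, so it eventually drops below any fixed positive level. By (A1)
  the thresholds stay eventually inside some [b0, b1] with 0 < b0 and b1 < 1. Hence for a true null
  v_in is eventually below b0 < beta_n, and for a false null 1 - v_in is eventually below 1 - b1,
  i.e. v_in > b1 > beta_n. Each of the finitely many coordinates is thus eventually correct almost
  surely, and so is the whole configuration.\<close>

lemma eventually_less_of_ln_rate:
  fixes v :: "nat \<Rightarrow> real" and J :: ereal
  assumes rate: "(\<lambda>n. ereal (ln (v n) / real n)) \<longlonglongrightarrow> - J" and "J > 0" and "b > 0"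
  shows "eventually (\<lambda>n. v n < b) sequentially"
proof -
  obtain c :: real where "0 < ereal c" "ereal c < J" using ereal_dense2[OF \<open>J > 0\<close>] by blast
  hence "c > 0" and "- J < - ereal c"
    by (auto simp: ereal_minus_less_minus simp del: uminus_ereal.simps)
  hence below_rate: "eventually (\<lambda>n. ereal (ln (v n) / real n) < - ereal c) sequentially"
    using rate order_tendstoD(2) by blast
  have "(\<lambda>n. exp (-c) ^ n) \<longlonglongrightarrow> 0"
    by (rule LIMSEQ_power_zero) (use \<open>c > 0\<close> in auto)
  hence geometric: "eventually (\<lambda>n. exp (-c) ^ n < b) sequentially"
    using \<open>b > 0\<close> order_tendstoD(2) by blast
  show ?thesis
    using below_rate geometric eventually_gt_at_top[of "0::nat"]
  proof eventually_elim
    case (elim n)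
    show ?case
    proof (cases "v n > 0")
      case True
      have "ln (v n) < - c * real n"
        using elim(1,3) by (simp add: divide_less_eq)
      hence "v n < exp (- c * real n)" using True by (metis exp_less_mono exp_ln)
      also have "\<dots> = exp (-c) ^ n" by (simp add: exp_of_nat2_mult[symmetric] mult.commute)
      finally show ?thesis using elim(2) by simp
    next
      case False
      thus ?thesis using \<open>b > 0\<close> by simp
    qed
  qed
qed

lemma eventually_not_greater_threshold:
  fixes v \<beta> :: "nat \<Rightarrow> real" and J :: ereal
  assumes "(\<lambda>n. ereal (ln (v n) / real n)) \<longlonglongrightarrow> - J" and "J > 0"
    and "liminf (\<lambda>n. ereal (\<beta> n)) > 0"
  shows "eventually (\<lambda>n. \<not> \<beta> n < v n) sequentially"
proof -
  obtain b :: real where "0 < ereal b" "ereal b < liminf (\<lambda>n. ereal (\<beta> n))"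
    using ereal_dense2[OF assms(3)] by blast
  hence "eventually (\<lambda>n. b < \<beta> n) sequentially"
    using less_LiminfD by force
  moreover have "eventually (\<lambda>n. v n < b) sequentially"
    using eventually_less_of_ln_rate assms(1,2) \<open>0 < ereal b\<close> by force
  ultimately show ?thesis by eventually_elim auto
qed

lemma eventually_greater_threshold:
  fixes v v' \<beta> :: "nat \<Rightarrow> real" and J :: ereal
  assumes "(\<lambda>n. ereal (ln (v' n) / real n)) \<longlonglongrightarrow> - J" and "J > 0"
    and "limsup (\<lambda>n. ereal (\<beta> n)) < 1"
    and complement: "\<And>n. v n = 1 - v' n"
  shows "eventually (\<lambda>n. \<beta> n < v n) sequentially"
proof -
  obtain b :: real where "limsup (\<lambda>n. ereal (\<beta> n)) < ereal b" "ereal b < 1"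
    using ereal_dense2[OF assms(3)] by blast
  hence "eventually (\<lambda>n. \<beta> n < b) sequentially"
    using Limsup_lessD by force
  moreover have "eventually (\<lambda>n. v' n < 1 - b) sequentially"
    using eventually_less_of_ln_rate assms(1,2) \<open>ereal b < 1\<close> by force
  ultimately show ?thesis by eventually_elim (auto simp: complement)
qed

lemma posterior_Diff_space:
  assumes "A \<in> sets Q" and "integrable Q (\<lambda>\<theta>. f \<theta> xs)" and "0 < (\<integral>\<theta>. f \<theta> xs \<partial>Q)"
  shows "posterior Q f xs (space Q - A) = 1 - posterior Q f xs A"
proof -
  let ?g = "\<lambda>\<theta>. f \<theta> xs"
  have integrable_on: "set_integrable Q B ?g" if "B \<in> sets Q" for B
    using integrable_real_mult_indicator[OF that assms(2)]
    by (simp add: set_integrable_def mult.commute)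
  have "(\<integral>\<theta>\<in>space Q - A. ?g \<theta> \<partial>Q) + (\<integral>\<theta>\<in>A. ?g \<theta> \<partial>Q) = (\<integral>\<theta>\<in>(space Q - A) \<union> A. ?g \<theta> \<partial>Q)"
    by (rule set_integral_Un[symmetric]) (use integrable_on assms(1) in auto)
  also have "(space Q - A) \<union> A = space Q"
    using sets.sets_into_space[OF assms(1)] by blast
  also have "(\<integral>\<theta>\<in>space Q. ?g \<theta> \<partial>Q) = (\<integral>\<theta>. ?g \<theta> \<partial>Q)"
    by (rule set_integral_space[OF assms(2)])
  finally show ?thesis
    using assms(3) unfolding posterior_def by (simp add: field_simps)
qed

lemma eventually_eq_of_coordinates:
  fixes D :: "'a \<Rightarrow> nat \<Rightarrow> 'b"
  assumes "\<And>i. i < m \<Longrightarrow> eventually (\<lambda>n. D n i = d i) F"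
    and "\<And>n i. m \<le> i \<Longrightarrow> D n i = d i"
  shows "eventually (\<lambda>n. D n = d) F"
proof -
  have "eventually (\<lambda>n. \<forall>i\<in>{..<m}. D n i = d i) F"
    by (rule eventually_ball_finite) (use assms(1) in auto)
  thus ?thesis
    by eventually_elim (metis assms(2) ext lessThan_iff not_le)
qed

theorem corollary1:
  fixes M :: "'w measure" and X :: "nat \<Rightarrow> 'w \<Rightarrow> 'x"
    and p :: "'x list \<Rightarrow> real" and f :: "'p \<Rightarrow> 'x list \<Rightarrow> real"
    and Q :: "'p measure" and coord :: "nat \<Rightarrow> 'p \<Rightarrow> 'c" and Theta1 :: "nat \<Rightarrow> 'c set"
    and m :: nat and \<beta> :: "nat \<Rightarrow> real" and dt :: "nat \<Rightarrow> bool"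
  assumes P: "prob_space M"
    and prior: "prob_space Q"
    and m: "1 < m"
    and Ups_meas: "\<And>k i. i < m \<Longrightarrow> Ups Q coord Theta1 k i \<in> sets Q"
    and lik_nonneg: "\<And>n w \<theta>. w \<in> space M \<Longrightarrow> \<theta> \<in> space Q \<Longrightarrow> 0 \<le> f \<theta> (data_vec X n w)"
    and lik_int: "\<And>n w. w \<in> space M \<Longrightarrow> integrable Q (\<lambda>\<theta>. f \<theta> (data_vec X n w))"
    and lik_pos: "\<And>n w. w \<in> space M \<Longrightarrow> 0 < (\<integral>\<theta>. f \<theta> (data_vec X n w) \<partial>Q)"
    and dt_conf: "dt \<in> configs m"
    and dt_true: "J_set M X p f Q (Theta_conf Q coord Theta1 m dt) = J_set M X p f Q (space Q)"
    and dt_unique: "\<And>d. d \<in> configs m \<Longrightarrow>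
        J_set M X p f Q (Theta_conf Q coord Theta1 m d) = J_set M X p f Q (space Q) \<Longrightarrow> d = dt"
    and prior_pos: "\<And>k i. i < m \<Longrightarrow> 0 < measure Q (Ups Q coord Theta1 k i)"
    and shalizi: "\<And>k i. i < m \<Longrightarrow> AE w in M.
        (\<lambda>n. ereal (ln (posterior Q f (data_vec X n w) (Ups Q coord Theta1 k i)) / real n))
          \<longlonglongrightarrow> - J_set M X p f Q (Ups Q coord Theta1 k i)"
    and sep0: "\<And>i. i < m \<Longrightarrow> \<not> dt i \<Longrightarrow> J_set M X p f Q (Ups Q coord Theta1 True i) > 0"
    and sep1: "\<And>i. i < m \<Longrightarrow> dt i \<Longrightarrow> J_set M X p f Q (Ups Q coord Theta1 False i) > 0"
    and A1: "liminf (\<lambda>n. ereal (\<beta> n)) > 0" "limsup (\<lambda>n. ereal (\<beta> n)) < 1"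
  shows "AE w in M. (\<lambda>n. delta Q f coord Theta1 m \<beta> dt (data_vec X n w) n) \<longlonglongrightarrow> 1"
proof -
  let ?v = "\<lambda>k i w n. posterior Q f (data_vec X n w) (Ups Q coord Theta1 k i)"
  let ?d = "\<lambda>w n. additive_rule Q f coord Theta1 m \<beta> (data_vec X n w) n"
  have complement: "?v True i w n = 1 - ?v False i w n" if i: "i < m" and w: "w \<in> space M" for i w n
  proof -
    have "Ups Q coord Theta1 True i = space Q - Ups Q coord Theta1 False i"
      by (auto simp: Ups_def)
    with posterior_Diff_space[of _ Q f "data_vec X n w"] Ups_meas[OF i] lik_int[OF w] lik_pos[OF w]
    show ?thesis by metis
  qed
  have "AE w in M. eventually (\<lambda>n. ?d w n i = dt i) sequentially" if i: "i < m" for i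
  proof (cases "dt i")
    case True
    show ?thesis using shalizi[OF i, of False] AE_space
    proof eventually_elim
      case (elim w)
      have "eventually (\<lambda>n. \<beta> n < ?v True i w n) sequentially"
        by (rule eventually_greater_threshold[OF elim(1) sep1[OF i True] A1(2)])
          (rule complement[OF i elim(2)])
      thus ?case by eventually_elim (use i True in \<open>simp add: additive_rule_def\<close>)
    qed
  next
    case False
    show ?thesis using shalizi[OF i, of True]
    proof eventually_elim
      case (elim w)
      have "eventually (\<lambda>n. \<not> \<beta> n < ?v True i w n) sequentially"
        using eventually_not_greater_threshold[OF elim sep0[OF i False] A1(1)] .
      thus ?case by eventually_elim (use False in \<open>simp add: additive_rule_def\<close>)
    qed
  qed
  hence "AE w in M. \<forall>i\<in>{..<m}. eventually (\<lambda>n. ?d w n i = dt i) sequentially"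
    by (subst AE_finite_all) auto
  thus ?thesis
  proof eventually_elim
    case (elim w)
    have "eventually (\<lambda>n. ?d w n = dt) sequentially"
    proof (rule eventually_eq_of_coordinates)
      show "eventually (\<lambda>n. ?d w n i = dt i) sequentially" if "i < m" for i
        using elim that by blast
      show "?d w n i = dt i" if "m \<le> i" for n i
        using dt_conf that by (simp add: configs_def additive_rule_def)
    qed
    thus ?case by (rule tendsto_eventually[OF eventually_mono]) (simp add: delta_def)
  qed
qed

end
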